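(* Let $P$ be a set of $n$ points chosen independently and uniformly at random from the unit cube $[0,1]^d$, and let $C$ be a convex body in $\mathbb{R}^d$ with $\mathrm{Vol}(C)\geq c$ for some constant $c\leq 1$. Then $\mathbb{E}[\operatorname{price}(P,C)]=O(n^{1-2/(d+1)})$, where the $O$ hides constants depending on $d$ and $C$.
   Context: For a closed convex $d$-dimensional polytope $F$, $f_k(F)$ denotes its number of $k$-dimensional faces. The inner fence $F_{\mathrm{in}}$ is a closed convex $d$-dimensional polytope with the minimum number of vertices such that $F_{\mathrm{in}}\subseteq C$ and $C\cap P=F_{\mathrm{in}}\cap P$. The outer fence $F_{\mathrm{out}}$ is a closed convex $d$-dimensional polytope with the minimum number of facets such that $C\subseteq F_{\mathrm{out}}$ and $C\cap P=F_{\mathrm{out}}\cap P$. The separation price is $\operatorname{price}(P,C)=f_0(F_{\mathrm{in}})+f_{d-1}(F_{\mathrm{out}})$. *)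

theory Defs
  imports "HOL-Analysis.Analysis" "HOL-Probability.Probability"
begin

definition num_vertices :: "'a::euclidean_space set \<Rightarrow> nat" where
  "num_vertices F = card {v. v extreme_point_of F}"

definition num_facets :: "'a::euclidean_space set \<Rightarrow> nat" where
  "num_facets F = card {G. G facet_of F}"

text \<open>Closed convex full-dimensional polytope (polytope already implies closed and convex).\<close>
definition full_polytope :: "'a::euclidean_space set \<Rightarrow> bool" where
  "full_polytope F \<longleftrightarrow> polytope F \<and> closed F \<and> convex F \<and> aff_dim F = int DIM('a)"

definition is_inner_candidate :: "'a::euclidean_space set \<Rightarrow> 'a set \<Rightarrow> 'a set \<Rightarrow> bool" where
  "is_inner_candidate P C F \<longleftrightarrow> full_polytope F \<and> F \<subseteq> C \<and> C \<inter> P = F \<inter> P"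

definition is_outer_candidate :: "'a::euclidean_space set \<Rightarrow> 'a set \<Rightarrow> 'a set \<Rightarrow> bool" where
  "is_outer_candidate P C F \<longleftrightarrow> full_polytope F \<and> C \<subseteq> F \<and> C \<inter> P = F \<inter> P"

definition inner_fence_vertices :: "'a::euclidean_space set \<Rightarrow> 'a set \<Rightarrow> nat" where
  "inner_fence_vertices P C = (LEAST k. \<exists>F. is_inner_candidate P C F \<and> num_vertices F = k)"

definition outer_fence_facets :: "'a::euclidean_space set \<Rightarrow> 'a set \<Rightarrow> nat" where
  "outer_fence_facets P C = (LEAST k. \<exists>F. is_outer_candidate P C F \<and> num_facets F = k)"

definition price :: "'a::euclidean_space set \<Rightarrow> 'a set \<Rightarrow> nat" where
  "price P C = inner_fence_vertices P C + outer_fence_facets P C"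

definition convex_body :: "'a::euclidean_space set \<Rightarrow> bool" where
  "convex_body C \<longleftrightarrow> compact C \<and> convex C \<and> interior C \<noteq> {}"

definition unit_cube_sample :: "nat \<Rightarrow> (nat \<Rightarrow> 'a::euclidean_space) measure" where
  "unit_cube_sample n = PiM {..<n} (\<lambda>_. uniform_measure lborel (cbox 0 One))"

end

theory Submission
  imports Defs
begin

(* Following Bronshteyn and Ivanov, project a delta-net N of the boundary of a large cube
   onto C. The convex hull of the projections is an inner polytope, the intersection of the
   supporting halfspaces at the projections is an outer polytope; both are determined by
   |N| = O(delta^(1-d)) points resp. halfspaces, and they are O(delta^2)-close to C in the
   Hausdorff sense, so the shell between them has volume O(delta^2). A sample point of the
   shell is either added as an extra vertex (if it lies in C) or cut off by an extra
   halfspace (if not), hence E price <= O(delta^(1-d)) + n O(delta^2), and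
   delta = n^(-1/(d+1)) balances the two terms. *)

section \<open>Fences from a polytope sandwich\<close>

definition is_halfspace :: "'a::real_inner set \<Rightarrow> bool" where
  "is_halfspace h \<longleftrightarrow> (\<exists>a b. a \<noteq> 0 \<and> h = {x. a \<bullet> x \<le> b})"

lemma num_facets_Inter_halfspaces_le:
  fixes H :: "'a::euclidean_space set set"
  assumes "finite H" and "\<forall>h\<in>H. is_halfspace h" and "interior (\<Inter>H) \<noteq> {}"
  shows "num_facets (\<Inter>H) \<le> card H"
proof -
  let ?S = "\<Inter>H"
  \<comment> \<open>A subfamily of least cardinality with the same intersection is irredundant, so each
      facet lies on the boundary hyperplane of one of its members.\<close>
  obtain F where "F \<subseteq> H" and FS: "\<Inter>F = ?S"
    and Fmin: "\<And>F'. F' \<subseteq> H \<and> \<Inter>F' = ?S \<Longrightarrow> card F \<le> card F'"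
    using ex_has_least_nat[of "\<lambda>F. F \<subseteq> H \<and> \<Inter>F = ?S" H card] by blast
  have "finite F" using \<open>F \<subseteq> H\<close> \<open>finite H\<close> finite_subset by blast
  have "\<forall>h\<in>F. \<exists>p. fst p \<noteq> 0 \<and> h = {x. fst p \<bullet> x \<le> snd p}"
    using assms(2) \<open>F \<subseteq> H\<close> unfolding is_halfspace_def by force
  then obtain p where p: "\<forall>h\<in>F. fst (p h) \<noteq> 0 \<and> h = {x. fst (p h) \<bullet> x \<le> snd (p h)}"
    by (metis bchoice)
  define a where "a h = fst (p h)" for h
  define b where "b h = snd (p h)" for h
  have ab: "a h \<noteq> 0 \<and> h = {x. a h \<bullet> x \<le> b h}" if "h \<in> F" for h
    using p that by (simp add: a_def b_def)
  have aff: "affine hull ?S = UNIV"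
    using assms(3) affine_hull_nonempty_interior by blast
  have seq: "?S = affine hull ?S \<inter> \<Inter>F" using aff FS by simp
  have irredundant: "?S \<subset> affine hull ?S \<inter> \<Inter>F'" if "F' \<subset> F" for F'
  proof -
    have "card F' < card F" using psubset_card_mono[OF \<open>finite F\<close> that] .
    then have "\<Inter>F' \<noteq> ?S" using Fmin[of F'] that \<open>F \<subseteq> H\<close> by auto
    moreover have "?S \<subseteq> \<Inter>F'" using that FS by blast
    ultimately show ?thesis using aff by auto
  qed
  have "{G. G facet_of ?S} \<subseteq> (\<lambda>h. ?S \<inter> {x. a h \<bullet> x = b h}) ` F"
    using facet_of_polyhedron_explicit[OF \<open>finite F\<close> seq ab irredundant] by blast
  then have "num_facets ?S \<le> card ((\<lambda>h. ?S \<inter> {x. a h \<bullet> x = b h}) ` F)"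
    unfolding num_facets_def using \<open>finite F\<close> by (intro card_mono) auto
  also have "\<dots> \<le> card F" by (rule card_image_le[OF \<open>finite F\<close>])
  also have "\<dots> \<le> card H" using \<open>F \<subseteq> H\<close> \<open>finite H\<close> by (rule card_mono[rotated])
  finally show ?thesis .
qed

lemma num_vertices_convex_hull_le:
  fixes V :: "'a::euclidean_space set"
  assumes "finite V"
  shows "num_vertices (convex hull V) \<le> card V"
  unfolding num_vertices_def
  using assms extreme_point_of_convex_hull by (intro card_mono) auto

lemma full_polytopeI:
  fixes F :: "'a::euclidean_space set"
  assumes "polytope F" and "interior F \<noteq> {}"
  shows "full_polytope F"
  unfolding full_polytope_def
  using assms polytope_imp_closed polytope_imp_convex aff_dim_nonempty_interior by blast

lemma separating_halfspace:
  fixes C :: "'a::euclidean_space set"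
  assumes "closed C" and "convex C" and "y \<notin> C"
  obtains h where "is_halfspace h" and "C \<subseteq> h" and "y \<notin> h"
proof (cases "C = {}")
  case True
  obtain e :: 'a where "e \<in> Basis" using nonempty_Basis by blast
  then show ?thesis
    using that[of "{x. e \<bullet> x \<le> e \<bullet> y - 1}"] True nonzero_Basis
    unfolding is_halfspace_def by fastforce
next
  case False
  obtain a b where "a \<bullet> y < b" and "\<forall>x\<in>C. b < a \<bullet> x"
    using separating_hyperplane_closed_point[OF assms(2,1,3)] by blast
  moreover have "a \<noteq> 0" using calculation False by force
  ultimately show ?thesis
    by (intro that[of "{x. (- a) \<bullet> x \<le> - b}"])
      (auto simp: is_halfspace_def intro!: exI[of _ "- a"] exI[of _ "- b"])
qed

lemma closed_Inter_halfspaces: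
  assumes "\<forall>h\<in>H. is_halfspace h"
  shows "closed (\<Inter>H)"
proof (intro closed_Inter ballI)
  fix h assume "h \<in> H"
  then obtain a b where "h = {x. a \<bullet> x \<le> b}" using assms by (auto simp: is_halfspace_def)
  then show "closed h" by (simp add: closed_halfspace_le)
qed

lemma polytope_Inter_halfspaces:
  fixes H :: "'a::euclidean_space set set"
  assumes "finite H" and "\<forall>h\<in>H. is_halfspace h" and "bounded (\<Inter>H)"
  shows "polytope (\<Inter>H)"
proof -
  have "polyhedron (\<Inter>H)" using assms(1,2) unfolding polyhedron_def is_halfspace_def by blast
  then show ?thesis using assms(3) by (simp add: polytope_eq_bounded_polyhedron)
qed

lemma inner_fence_vertices_le:
  fixes C :: "'a::euclidean_space set"
  assumes "convex C" and "finite V" and "convex hull V \<subseteq> C"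
    and "interior (convex hull V) \<noteq> {}" and "finite P"
  shows "inner_fence_vertices P C \<le> card V + card (P \<inter> (C - convex hull V))"
proof -
  define X where "X = P \<inter> (C - convex hull V)"
  define F where "F = convex hull (V \<union> X)"
  have "finite (V \<union> X)" using assms(2,5) by (simp add: X_def)
  have hull_sub: "convex hull V \<subseteq> F" unfolding F_def by (intro hull_mono) blast
  have "F \<subseteq> C"
    unfolding F_def X_def using assms(1,3) hull_subset[of V convex] by (intro hull_minimal) auto
  moreover have "C \<inter> P \<subseteq> F"
    using hull_sub hull_subset[of "V \<union> X" convex] by (auto simp: F_def X_def)
  moreover have "full_polytope F"
    using \<open>finite (V \<union> X)\<close> assms(4) interior_mono[OF hull_sub]
    by (intro full_polytopeI) (auto simp: F_def polytope_def)
  ultimately have "is_inner_candidate P C F"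
    unfolding is_inner_candidate_def by blast
  then have "inner_fence_vertices P C \<le> num_vertices F"
    unfolding inner_fence_vertices_def by (intro Least_le) blast
  also have "\<dots> \<le> card (V \<union> X)"
    unfolding F_def by (rule num_vertices_convex_hull_le[OF \<open>finite (V \<union> X)\<close>])
  also have "\<dots> \<le> card V + card X" by (rule card_Un_le)
  finally show ?thesis by (simp add: X_def)
qed

lemma outer_fence_facets_le:
  fixes C :: "'a::euclidean_space set"
  assumes "closed C" and "convex C" and "interior C \<noteq> {}"
    and "finite H" and "\<forall>h\<in>H. is_halfspace h" and "C \<subseteq> \<Inter>H" and "bounded (\<Inter>H)"
    and "finite P"
  shows "outer_fence_facets P C \<le> card H + card (P \<inter> (\<Inter>H - C))"
proof -
  define X where "X = P \<inter> (\<Inter>H - C)"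
  have "\<forall>y\<in>X. \<exists>h. is_halfspace h \<and> C \<subseteq> h \<and> y \<notin> h"
  proof
    fix y assume "y \<in> X"
    then have "y \<notin> C" by (simp add: X_def)
    then obtain h where "is_halfspace h" "C \<subseteq> h" "y \<notin> h"
      by (rule separating_halfspace[OF assms(1,2)])
    then show "\<exists>h. is_halfspace h \<and> C \<subseteq> h \<and> y \<notin> h" by blast
  qed
  then obtain sep where sep: "\<And>y. y \<in> X \<Longrightarrow> is_halfspace (sep y) \<and> C \<subseteq> sep y \<and> y \<notin> sep y"
    by metis
  define G where "G = H \<union> sep ` X"
  have "finite G" using assms(4,8) by (simp add: G_def X_def)
  have halfspaces: "\<forall>g\<in>G. is_halfspace g" using assms(5) sep by (auto simp: G_def)
  have "C \<subseteq> \<Inter>G" using assms(6) sep by (auto simp: G_def)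
  then have "interior (\<Inter>G) \<noteq> {}" using assms(3) interior_mono by blast
  have "bounded (\<Inter>G)" using assms(7) by (rule bounded_subset) (auto simp: G_def)
  have "\<Inter>G \<inter> P \<subseteq> C"
  proof
    fix y assume y: "y \<in> \<Inter>G \<inter> P"
    show "y \<in> C"
    proof (rule ccontr)
      assume "y \<notin> C"
      with y have "y \<in> X" by (auto simp: G_def X_def)
      with y sep show False by (auto simp: G_def)
    qed
  qed
  then have "is_outer_candidate P C (\<Inter>G)"
    using \<open>C \<subseteq> \<Inter>G\<close> \<open>interior (\<Inter>G) \<noteq> {}\<close>
      polytope_Inter_halfspaces[OF \<open>finite G\<close> halfspaces \<open>bounded (\<Inter>G)\<close>]
    unfolding is_outer_candidate_def by (auto intro: full_polytopeI)
  then have "outer_fence_facets P C \<le> num_facets (\<Inter>G)"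
    unfolding outer_fence_facets_def by (intro Least_le) blast
  also have "\<dots> \<le> card G"
    by (rule num_facets_Inter_halfspaces_le[OF \<open>finite G\<close> halfspaces \<open>interior (\<Inter>G) \<noteq> {}\<close>])
  also have "\<dots> \<le> card H + card (sep ` X)" unfolding G_def by (rule card_Un_le)
  also have "\<dots> \<le> card H + card X"
    using card_image_le[of X sep] assms(8) by (simp add: X_def)
  finally show ?thesis by (simp add: X_def)
qed

definition polytope_sandwich :: "'a::euclidean_space set \<Rightarrow> 'a set set \<Rightarrow> 'a set \<Rightarrow> bool" where
  "polytope_sandwich V H C \<longleftrightarrow>
     finite V \<and> finite H \<and> (\<forall>h\<in>H. is_halfspace h) \<and> bounded (\<Inter>H) \<and>
     interior (convex hull V) \<noteq> {} \<and> convex hull V \<subseteq> C \<and> C \<subseteq> \<Inter>H"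

lemma price_le_polytope_sandwich:
  fixes C :: "'a::euclidean_space set"
  assumes "closed C" and "convex C" and "polytope_sandwich V H C" and "finite P"
  shows "price P C \<le> card V + card H + card (P \<inter> (\<Inter>H - convex hull V))"
proof -
  from assms(3) have V: "finite V" "convex hull V \<subseteq> C" "interior (convex hull V) \<noteq> {}"
    and H: "finite H" "\<forall>h\<in>H. is_halfspace h" "C \<subseteq> \<Inter>H" "bounded (\<Inter>H)"
    unfolding polytope_sandwich_def by auto
  have "interior C \<noteq> {}" using V(2,3) interior_mono by blast
  have "card (P \<inter> (C - convex hull V)) + card (P \<inter> (\<Inter>H - C))
      = card (P \<inter> (C - convex hull V) \<union> P \<inter> (\<Inter>H - C))"
    using assms(4) V(2) by (intro card_Un_disjoint[symmetric]) auto
  also have "\<dots> \<le> card (P \<inter> (\<Inter>H - convex hull V))"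
    using assms(4) V(2) H(3) by (intro card_mono) auto
  finally have shell: "card (P \<inter> (C - convex hull V)) + card (P \<inter> (\<Inter>H - C))
      \<le> card (P \<inter> (\<Inter>H - convex hull V))" .
  show ?thesis
    using inner_fence_vertices_le[OF assms(2) V assms(4)]
      outer_fence_facets_le[OF assms(1,2) \<open>interior C \<noteq> {}\<close> H(1,2,3,4) assms(4)] shell
    unfolding price_def by linarith
qed

section \<open>Expected number of sample points in a region\<close>

lemma card_image_Int_le_sum_indicator:
  assumes "finite A"
  shows "of_nat (card (f ` A \<inter> S)) \<le> (\<Sum>i\<in>A. indicator S (f i) :: ennreal)"
proof -
  have "f ` A \<inter> S = f ` (A \<inter> {i. f i \<in> S})" by auto
  then have "card (f ` A \<inter> S) \<le> card (A \<inter> {i. f i \<in> S})"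
    using assms by (simp add: card_image_le)
  moreover have "(\<Sum>i\<in>A. indicator S (f i) :: ennreal) = of_nat (card (A \<inter> {i. f i \<in> S}))"
    using assms by (simp add: indicator_def)
  ultimately show ?thesis by simp
qed

lemma nn_integral_PiM_sum_indicator:
  assumes "prob_space M" and "S \<in> sets M"
  shows "(\<integral>\<^sup>+ \<omega>. (\<Sum>i<n. indicator S (\<omega> i)) \<partial>PiM {..<n} (\<lambda>_. M)) = of_nat n * emeasure M S"
proof -
  have coord: "(\<lambda>\<omega>. \<omega> i) \<in> measurable (PiM {..<n} (\<lambda>_. M)) M" if "i < n" for i
    using that by (intro measurable_component_singleton) auto
  have meas: "(\<lambda>\<omega>. indicator S (\<omega> i) :: ennreal) \<in> borel_measurable (PiM {..<n} (\<lambda>_. M))"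
    if "i < n" for i
    using measurable_compose[OF coord[OF that] borel_measurable_indicator[OF assms(2)]] .
  have "(\<integral>\<^sup>+ \<omega>. indicator S (\<omega> i) \<partial>PiM {..<n} (\<lambda>_. M)) = emeasure M S" if "i < n" for i
  proof -
    have "distr (PiM {..<n} (\<lambda>_. M)) M (\<lambda>\<omega>. \<omega> i) = M"
      using that assms(1) by (intro distr_PiM_component) auto
    then show ?thesis
      using nn_integral_distr[OF coord[OF that], of "indicator S"] assms(2) by simp
  qed
  then have "(\<integral>\<^sup>+ \<omega>. (\<Sum>i<n. indicator S (\<omega> i)) \<partial>PiM {..<n} (\<lambda>_. M)) = (\<Sum>i<n. emeasure M S)"
    using meas by (subst nn_integral_sum) auto
  then show ?thesis by simp
qed

lemma prob_space_uniform_unit_cube: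
  "prob_space (uniform_measure lborel (cbox 0 (One :: 'a::euclidean_space)))"
  by (rule prob_space_uniform_measure) (simp_all add: emeasure_lborel_cbox_eq)

lemma prob_space_unit_cube_sample:
  "prob_space (unit_cube_sample n :: (nat \<Rightarrow> 'a::euclidean_space) measure)"
  unfolding unit_cube_sample_def by (intro prob_space_PiM prob_space_uniform_unit_cube)

lemma nn_integral_unit_cube_sample_sum_indicator_le:
  fixes S :: "'a::euclidean_space set"
  assumes "S \<in> sets borel"
  shows "(\<integral>\<^sup>+ \<omega>. (\<Sum>i<n. indicator S (\<omega> i)) \<partial>unit_cube_sample n) \<le> of_nat n * emeasure lborel S"
proof -
  have "emeasure (uniform_measure lborel (cbox 0 (One :: 'a))) S
      = emeasure lborel (cbox 0 One \<inter> S)"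
    using assms by (simp add: emeasure_uniform_measure emeasure_lborel_cbox_eq divide_ennreal_def)
  also have "\<dots> \<le> emeasure lborel S" using assms by (intro emeasure_mono) auto
  finally show ?thesis
    unfolding unit_cube_sample_def
    using assms by (simp add: nn_integral_PiM_sum_indicator prob_space_uniform_unit_cube mult_left_mono)
qed

lemma price_le_sum_indicator:
  fixes C :: "'a::euclidean_space set" and \<omega> :: "nat \<Rightarrow> 'a"
  assumes "closed C" and "convex C" and "polytope_sandwich V H C"
  shows "ennreal (real (price (\<omega> ` {..<n}) C))
    \<le> ennreal (real (card V + card H)) + (\<Sum>i<n. indicator (\<Inter>H - convex hull V) (\<omega> i))"
proof -
  have "price (\<omega> ` {..<n}) C \<le> card V + card H + card (\<omega> ` {..<n} \<inter> (\<Inter>H - convex hull V))"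
    using price_le_polytope_sandwich[OF assms] by simp
  then have "ennreal (real (price (\<omega> ` {..<n}) C))
      \<le> ennreal (real (card V + card H)) + of_nat (card (\<omega> ` {..<n} \<inter> (\<Inter>H - convex hull V)))"
    by (simp add: ennreal_of_nat_eq_real_of_nat flip: ennreal_plus)
  also have "\<dots> \<le> ennreal (real (card V + card H)) + (\<Sum>i<n. indicator (\<Inter>H - convex hull V) (\<omega> i))"
    by (intro add_left_mono card_image_Int_le_sum_indicator) simp
  finally show ?thesis .
qed

lemma expected_price_le_polytope_sandwich:
  fixes C :: "'a::euclidean_space set"
  assumes "closed C" and "convex C" and sandwich: "polytope_sandwich V H C"
  shows "(\<integral>\<^sup>+ \<omega>. ennreal (real (price (\<omega> ` {..<n}) C)) \<partial>unit_cube_sample n)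
    \<le> ennreal (real (card V + card H) + real n * measure lborel (\<Inter>H - convex hull V))"
proof -
  define S where "S = \<Inter>H - convex hull V"
  define c where "c = real (card V + card H)"
  have "finite V" and "\<forall>h\<in>H. is_halfspace h" and "bounded (\<Inter>H)"
    using sandwich by (auto simp: polytope_sandwich_def)
  then have S_borel [measurable]: "S \<in> sets borel"
    unfolding S_def
    by (intro sets.Diff borel_closed closed_Inter_halfspaces compact_imp_closed
        finite_imp_compact_convex_hull)
  have "bounded S" using \<open>bounded (\<Inter>H)\<close> by (rule bounded_subset) (auto simp: S_def)
  then have "emeasure lborel S \<noteq> \<infinity>" using emeasure_bounded_finite by fastforce
  then have emeasure_S: "emeasure lborel S = ennreal (measure lborel S)"
    using emeasure_eq_ennreal_measure by auto
  have "(\<integral>\<^sup>+ \<omega>. ennreal (real (price (\<omega> ` {..<n}) C)) \<partial>unit_cube_sample n)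
      \<le> (\<integral>\<^sup>+ \<omega>. ennreal c + (\<Sum>i<n. indicator S (\<omega> i)) \<partial>unit_cube_sample n)"
    using price_le_sum_indicator[OF assms] unfolding S_def c_def by (intro nn_integral_mono)
  also have "\<dots> = ennreal c + (\<integral>\<^sup>+ \<omega>. (\<Sum>i<n. indicator S (\<omega> i)) \<partial>unit_cube_sample n)"
  proof -
    have "emeasure (unit_cube_sample n :: (nat \<Rightarrow> 'a) measure) (space (unit_cube_sample n)) = 1"
      by (rule prob_space.emeasure_space_1[OF prob_space_unit_cube_sample])
    moreover have "(\<lambda>\<omega>. \<Sum>i<n. indicator S (\<omega> i) :: ennreal) \<in> borel_measurable (unit_cube_sample n)"
      unfolding unit_cube_sample_def by measurable
    ultimately show ?thesis by (simp add: nn_integral_add)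
  qed
  also have "\<dots> \<le> ennreal c + of_nat n * emeasure lborel S"
    by (intro add_left_mono nn_integral_unit_cube_sample_sum_indicator_le S_borel)
  also have "\<dots> = ennreal (c + real n * measure lborel S)"
    by (simp add: emeasure_S c_def ennreal_of_nat_eq_real_of_nat ennreal_mult ennreal_plus)
  finally show ?thesis by (simp add: c_def S_def)
qed

section \<open>Convex sets close to each other\<close>

lemma one_plus_power_minus_one_le:
  fixes x :: real
  assumes "0 \<le> x" and "x \<le> 1"
  shows "(1 + x) ^ k - 1 \<le> (2 ^ k - 1) * x"
proof (induction k)
  case 0
  then show ?case by simp
next
  case (Suc k)
  have "(1 + x) ^ Suc k - 1 = (1 + x) * ((1 + x) ^ k - 1) + x"
    by (simp add: algebra_simps)
  also have "\<dots> \<le> 2 * ((2 ^ k - 1) * x) + x"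
  proof -
    have "(1 + x) * ((1 + x) ^ k - 1) \<le> 2 * ((1 + x) ^ k - 1)"
      using assms by (intro mult_right_mono) auto
    also have "\<dots> \<le> 2 * ((2 ^ k - 1) * x)" using Suc by simp
    finally show ?thesis by simp
  qed
  also have "\<dots> = (2 ^ Suc k - 1) * x" by (simp add: algebra_simps)
  finally show ?case .
qed

lemma closest_point_unit_normal:
  fixes S :: "'a::euclidean_space set"
  assumes "closed S" and "convex S" and "S \<noteq> {}" and "y \<notin> S"
  obtains z v where "z \<in> S" and "norm v = 1" and "v \<bullet> y - v \<bullet> z = dist y z"
    and "\<And>z'. z' \<in> S \<Longrightarrow> v \<bullet> z' \<le> v \<bullet> z"
proof -
  define z where "z = closest_point S y"
  have "z \<in> S" unfolding z_def using closest_point_in_set[OF assms(1,3)] .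
  then have "y \<noteq> z" using assms(4) by blast
  define v where "v = (1 / norm (y - z)) *\<^sub>R (y - z)"
  have "norm v = 1" using \<open>y \<noteq> z\<close> by (simp add: v_def)
  moreover have "v \<bullet> y - v \<bullet> z = dist y z"
  proof -
    have "v \<bullet> y - v \<bullet> z = (1 / norm (y - z)) * ((y - z) \<bullet> (y - z))"
      by (simp add: v_def inner_diff_right diff_divide_distrib)
    also have "\<dots> = dist y z"
      using \<open>y \<noteq> z\<close> by (simp add: dist_norm dot_square_norm power2_eq_square)
    finally show ?thesis .
  qed
  moreover have "v \<bullet> z' \<le> v \<bullet> z" if "z' \<in> S" for z'
  proof -
    have "(y - z) \<bullet> (z' - z) \<le> 0"
      unfolding z_def using closest_point_dot[OF assms(2,1) that] .
    then show ?thesis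
      by (simp add: v_def inner_diff_right divide_right_mono)
  qed
  ultimately show ?thesis using that \<open>z \<in> S\<close> by blast
qed

lemma cball_subset_if_near_convex:
  fixes S :: "'a::euclidean_space set"
  assumes "closed S" and "convex S" and "cball c r \<subseteq> T"
    and near: "\<forall>y\<in>T. \<exists>z\<in>S. dist y z \<le> \<epsilon>" and "0 \<le> \<epsilon>" and "s + \<epsilon> < r"
  shows "cball c s \<subseteq> S"
proof
  fix y assume y: "y \<in> cball c s"
  show "y \<in> S"
  proof (rule ccontr)
    assume "y \<notin> S"
    have "dist c y \<le> s" using y by simp
    then have "0 \<le> r" using zero_le_dist[of c y] assms(5,6) by linarith
    then have "c \<in> T" using assms(3) by auto
    then have "S \<noteq> {}" using near by blast
    then obtain z v where "z \<in> S" and v: "norm v = 1" and "v \<bullet> y - v \<bullet> z = dist y z"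
      and supp: "\<And>z'. z' \<in> S \<Longrightarrow> v \<bullet> z' \<le> v \<bullet> z"
      using closest_point_unit_normal[OF assms(1,2) _ \<open>y \<notin> S\<close>] by metis
    \<comment> \<open>Push y outward by r - s: the new point is still in T, but far from S.\<close>
    define y' where "y' = y + (r - s) *\<^sub>R v"
    have "dist c y' \<le> dist c y + (r - s)"
      using dist_triangle[of c y' y] v assms(5,6) by (simp add: y'_def dist_norm)
    then have "y' \<in> T" using y assms(3) by (auto simp: subset_iff)
    then obtain z' where "z' \<in> S" and "dist y' z' \<le> \<epsilon>" using near by blast
    then have "v \<bullet> y' - v \<bullet> z' \<le> \<epsilon>"
      using norm_cauchy_schwarz[of v "y' - z'"] v by (simp add: dist_norm inner_diff_right)
    moreover have "v \<bullet> y' = v \<bullet> y + (r - s)"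
      using v by (simp add: y'_def inner_add_right dot_square_norm)
    moreover have "dist y z > 0" using \<open>z \<in> S\<close> \<open>y \<notin> S\<close> by auto
    ultimately show False
      using supp[OF \<open>z' \<in> S\<close>] \<open>v \<bullet> y - v \<bullet> z = dist y z\<close> assms(6) by linarith
  qed
qed

lemma subset_homothetic_image_if_near:
  fixes S :: "'a::euclidean_space set"
  assumes "convex S" and "cball c r \<subseteq> S" and "r > 0" and "\<eta> > 0"
    and near: "\<forall>x\<in>T. \<exists>y\<in>S. dist x y \<le> \<eta>"
  shows "T \<subseteq> (\<lambda>x. (1 + \<eta> / r) *\<^sub>R x + (c - (1 + \<eta> / r) *\<^sub>R c)) ` S"
proof
  fix x assume "x \<in> T"
  then obtain y where "y \<in> S" and "dist x y \<le> \<eta>" using near by blast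
  define l where "l = 1 + \<eta> / r"
  have "l > 1" using assms(3,4) by (simp add: l_def)
  \<comment> \<open>x is the image of a convex combination of y and a point z of the inner ball.\<close>
  define z where "z = c + (r / \<eta>) *\<^sub>R (x - y)"
  have "norm ((r / \<eta>) *\<^sub>R (x - y)) = (r / \<eta>) * dist x y"
    using assms(3,4) by (simp add: dist_norm)
  also have "\<dots> \<le> (r / \<eta>) * \<eta>"
    using \<open>dist x y \<le> \<eta>\<close> assms(3,4) by (intro mult_left_mono) auto
  also have "\<dots> = r" using assms(4) by simp
  finally have "z \<in> S" using assms(2) by (auto simp: z_def dist_norm subset_iff)
  define x' where "x' = (1 / l) *\<^sub>R y + (1 - 1 / l) *\<^sub>R z"
  have "x' \<in> S" unfolding x'_def
    using \<open>l > 1\<close> \<open>y \<in> S\<close> \<open>z \<in> S\<close> \<open>convex S\<close> by (intro convexD) auto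
  moreover have "x = l *\<^sub>R x' + (c - l *\<^sub>R c)"
  proof -
    have "l *\<^sub>R x' = y + (l - 1) *\<^sub>R z" using \<open>l > 1\<close> by (simp add: x'_def algebra_simps)
    also have "(l - 1) *\<^sub>R z = (l - 1) *\<^sub>R c + (x - y)"
      using assms(3,4) by (simp add: z_def l_def algebra_simps)
    finally show ?thesis by (simp add: algebra_simps)
  qed
  ultimately show "x \<in> (\<lambda>x. (1 + \<eta> / r) *\<^sub>R x + (c - (1 + \<eta> / r) *\<^sub>R c)) ` S"
    unfolding l_def[symmetric] by blast
qed

lemma measure_le_if_near_convex:
  fixes S :: "'a::euclidean_space set"
  assumes "compact S" and "convex S" and "cball c r \<subseteq> S" and "r > 0" and "\<eta> > 0"
    and "T \<in> sets borel" and "\<forall>x\<in>T. \<exists>y\<in>S. dist x y \<le> \<eta>"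
  shows "measure lborel T \<le> (1 + \<eta> / r) ^ DIM('a) * measure lborel S"
proof -
  define l where "l = 1 + \<eta> / r"
  define D where "D = (\<lambda>x. l *\<^sub>R x + (c - l *\<^sub>R c)) ` S"
  have "compact D"
    unfolding D_def using assms(1) by (intro compact_continuous_image continuous_intros)
  have "T \<subseteq> D"
    unfolding D_def l_def by (rule subset_homothetic_image_if_near[OF assms(2-5,7)])
  then have "measure lborel T \<le> measure lborel D"
    using assms(6) fmeasurable_compact[OF \<open>compact D\<close>] by (intro measure_mono_fmeasurable) auto
  also have "measure lborel D = measure lebesgue D"
    using \<open>compact D\<close> by (simp add: borel_compact)
  also have "\<dots> = \<bar>l\<bar> ^ DIM('a) * measure lebesgue S"
    unfolding D_def by (rule measure_lebesgue_affine)
  also have "\<dots> = l ^ DIM('a) * measure lborel S"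
    using assms(1,4,5) by (simp add: borel_compact l_def)
  finally show ?thesis by (simp add: l_def)
qed

lemma closest_point_along_normal:
  fixes C :: "'a::euclidean_space set"
  assumes "convex C" and "closed C" and "q \<in> C" and normal: "\<forall>y\<in>C. v \<bullet> y \<le> v \<bullet> q"
    and "t \<ge> 0"
  shows "closest_point C (q + t *\<^sub>R v) = q"
proof (rule closest_point_unique[symmetric, OF assms(1-3)], intro ballI)
  fix y assume "y \<in> C"
  then have "v \<bullet> (q - y) \<ge> 0" using normal by (simp add: inner_diff_right)
  have "(dist (q + t *\<^sub>R v) q)\<^sup>2 = t\<^sup>2 * (norm v)\<^sup>2"
    by (simp add: dist_norm power_mult_distrib)
  also have "\<dots> \<le> (q - y) \<bullet> (q - y) + 2 * t * (v \<bullet> (q - y)) + t\<^sup>2 * (norm v)\<^sup>2"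
    using \<open>v \<bullet> (q - y) \<ge> 0\<close> \<open>t \<ge> 0\<close> by simp
  also have "\<dots> = (norm ((q - y) + t *\<^sub>R v))\<^sup>2"
    unfolding power2_norm_eq_inner
    by (simp add: inner_add_left inner_add_right inner_commute power2_eq_square algebra_simps)
  also have "\<dots> = (dist (q + t *\<^sub>R v) y)\<^sup>2" by (simp add: dist_norm algebra_simps)
  finally show "dist (q + t *\<^sub>R v) q \<le> dist (q + t *\<^sub>R v) y"
    by (simp add: power2_le_iff_abs_le)
qed

section \<open>Supporting halfspaces at nearest points\<close>

definition supporting_halfspace :: "'a::euclidean_space set \<Rightarrow> 'a \<Rightarrow> 'a set" where
  "supporting_halfspace C u =
     {x. (u - closest_point C u) \<bullet> x \<le> (u - closest_point C u) \<bullet> closest_point C u}"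

lemma subset_supporting_halfspace:
  assumes "convex C" and "closed C"
  shows "C \<subseteq> supporting_halfspace C u"
  using closest_point_dot[OF assms] by (auto simp: supporting_halfspace_def inner_diff_right)

lemma is_halfspace_supporting_halfspace:
  assumes "closed C" and "C \<noteq> {}" and "u \<notin> C"
  shows "is_halfspace (supporting_halfspace C u)"
proof -
  have "closest_point C u \<in> C" by (rule closest_point_in_set[OF assms(1,2)])
  then have "u - closest_point C u \<noteq> 0" using assms(3) by auto
  then show ?thesis unfolding is_halfspace_def supporting_halfspace_def by blast
qed

lemma closed_supporting_halfspace: "closed (supporting_halfspace C u)"
  unfolding supporting_halfspace_def by (rule closed_halfspace_le)

lemma dist_closest_point_le_dist_normal_ray:
  fixes C :: "'a::euclidean_space set"
  assumes "convex C" and "closed C" and "q \<in> C" and normal: "\<forall>y\<in>C. v \<bullet> y \<le> v \<bullet> q"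
    and "t \<ge> 0"
  shows "dist q (closest_point C u) \<le> dist u (q + t *\<^sub>R v)"
proof -
  have "closest_point C (q + t *\<^sub>R v) = q"
    by (rule closest_point_along_normal[OF assms])
  then show ?thesis
    using closest_point_lipschitz[OF assms(1,2), of "q + t *\<^sub>R v" u] assms(3)
    by (auto simp: dist_commute)
qed

lemma closest_point_near_normal_ray:
  fixes C :: "'a::euclidean_space set" and u :: 'a
  defines "p \<equiv> closest_point C u"
  assumes "convex C" and "closed C" and "q \<in> C" and v: "norm v = 1"
    and normal: "\<forall>y\<in>C. v \<bullet> y \<le> v \<bullet> q" and "t \<ge> 1"
    and near: "dist u (q + t *\<^sub>R v) \<le> \<delta>" and "\<delta> \<le> 1/4"
  shows "v \<bullet> (q - p) \<le> 2 * \<delta>\<^sup>2" and "- 2 * \<delta>\<^sup>2 \<le> (u - p) \<bullet> (q - p)" and "1/2 \<le> (u - p) \<bullet> v"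
proof -
  have "p \<in> C" unfolding p_def using closest_point_in_set[OF assms(3)] assms(4) by blast
  define w where "w = q - p"
  define e where "e = (u - p) - t *\<^sub>R v"
  \<comment> \<open>Since p is \<delta>-close to q, the vector u - p is t v up to an error of size 2 \<delta>.\<close>
  have "norm w \<le> \<delta>"
    using dist_closest_point_le_dist_normal_ray[OF assms(2-4) normal, of t u] \<open>t \<ge> 1\<close> near
    by (simp add: w_def p_def dist_norm)
  have "norm e \<le> 2 * \<delta>"
  proof -
    have "e = (u - (q + t *\<^sub>R v)) + w" by (simp add: e_def w_def algebra_simps)
    then show ?thesis using norm_triangle_ineq[of "u - (q + t *\<^sub>R v)" w] near \<open>norm w \<le> \<delta>\<close>
      by (simp add: dist_norm)
  qed
  have "\<bar>e \<bullet> w\<bar> \<le> 2 * \<delta>\<^sup>2"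
  proof -
    have "\<bar>e \<bullet> w\<bar> \<le> norm e * norm w" by (rule Cauchy_Schwarz_ineq2)
    also have "\<dots> \<le> (2 * \<delta>) * \<delta>"
      using \<open>norm e \<le> 2 * \<delta>\<close> \<open>norm w \<le> \<delta>\<close> order_trans[OF norm_ge_zero \<open>norm w \<le> \<delta>\<close>]
      by (intro mult_mono) auto
    finally show ?thesis by (simp add: power2_eq_square)
  qed
  have "(u - p) \<bullet> w \<le> 0" unfolding p_def w_def using closest_point_dot[OF assms(2-4)] .
  have "v \<bullet> w \<ge> 0" using normal \<open>p \<in> C\<close> by (simp add: w_def inner_diff_right)
  then have "0 \<le> t * (v \<bullet> w)" and "v \<bullet> w \<le> t * (v \<bullet> w)"
    using \<open>t \<ge> 1\<close> by (simp_all add: mult_le_cancel_right1)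
  moreover have "(u - p) \<bullet> w = t * (v \<bullet> w) + e \<bullet> w" by (simp add: e_def inner_diff_left)
  ultimately show "v \<bullet> (q - p) \<le> 2 * \<delta>\<^sup>2" and "- 2 * \<delta>\<^sup>2 \<le> (u - p) \<bullet> (q - p)"
    using \<open>(u - p) \<bullet> w \<le> 0\<close> \<open>\<bar>e \<bullet> w\<bar> \<le> 2 * \<delta>\<^sup>2\<close> by (auto simp: w_def abs_le_iff)
  have "\<bar>e \<bullet> v\<bar> \<le> 2 * \<delta>" using Cauchy_Schwarz_ineq2[of e v] v \<open>norm e \<le> 2 * \<delta>\<close> by simp
  moreover have "(u - p) \<bullet> v = t + e \<bullet> v" using v by (simp add: e_def inner_diff_left dot_square_norm)
  ultimately show "1/2 \<le> (u - p) \<bullet> v" using \<open>t \<ge> 1\<close> \<open>\<delta> \<le> 1/4\<close> by linarith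
qed

lemma supporting_halfspace_normal_ray_le:
  fixes C :: "'a::euclidean_space set"
  assumes "convex C" and "closed C" and "q \<in> C" and "norm v = 1"
    and "\<forall>y\<in>C. v \<bullet> y \<le> v \<bullet> q" and "t \<ge> 1"
    and "dist u (q + t *\<^sub>R v) \<le> \<delta>" and "\<delta> \<le> 1/4"
    and "0 \<le> h" and "q + h *\<^sub>R v \<in> supporting_halfspace C u"
  shows "h \<le> 4 * \<delta>\<^sup>2"
proof -
  let ?p = "closest_point C u"
  have "h * ((u - ?p) \<bullet> v) + (u - ?p) \<bullet> (q - ?p) \<le> 0"
    using assms(10) by (simp add: supporting_halfspace_def algebra_simps inner_diff_right inner_add_right)
  moreover have "h / 2 \<le> h * ((u - ?p) \<bullet> v)"
    using closest_point_near_normal_ray(3)[OF assms(1-8)] \<open>0 \<le> h\<close> mult_left_mono by fastforce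
  ultimately show ?thesis using closest_point_near_normal_ray(2)[OF assms(1-8)] by linarith
qed

section \<open>Polytopes from a ray net\<close>

locale ray_net =
  fixes C :: "'a::euclidean_space set" and N :: "'a set" and \<delta> :: real
  assumes compact: "compact C" and convex: "convex C" and nonempty: "C \<noteq> {}"
    and finite_net: "finite N" and \<delta>_le: "\<delta> \<le> 1/4"
    and hits_rays: "\<And>q v. q \<in> C \<Longrightarrow> norm v = 1 \<Longrightarrow> \<exists>t\<ge>1. \<exists>u\<in>N. dist u (q + t *\<^sub>R v) \<le> \<delta>"
begin

lemma closed: "closed C"
  using compact by (rule compact_imp_closed)

lemma convex_hull_closest_points_subset: "convex hull (closest_point C ` N) \<subseteq> C"
  using closest_point_in_set[OF closed nonempty] convex by (intro hull_minimal) auto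

lemma near_convex_hull_closest_points:
  assumes "y \<in> C"
  shows "\<exists>z\<in>convex hull (closest_point C ` N). dist y z \<le> 2 * \<delta>\<^sup>2"
proof (cases "y \<in> convex hull (closest_point C ` N)")
  case True
  then show ?thesis by force
next
  case False
  let ?Q = "convex hull (closest_point C ` N)"
  obtain b :: 'a where "b \<in> Basis" using nonempty_Basis by blast
  then have "N \<noteq> {}" using hits_rays[OF assms, of b] by (auto simp: norm_Basis)
  then have "compact ?Q" and "?Q \<noteq> {}"
    using finite_net by (auto intro: finite_imp_compact_convex_hull)
  then obtain z v where "z \<in> ?Q" and v: "norm v = 1" and "v \<bullet> y - v \<bullet> z = dist y z"
    and z_max: "\<And>z'. z' \<in> ?Q \<Longrightarrow> v \<bullet> z' \<le> v \<bullet> z"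
    using closest_point_unit_normal[OF compact_imp_closed convex_convex_hull _ False] by metis
  have "continuous_on C (\<lambda>y. v \<bullet> y)" by (intro continuous_intros)
  then obtain q where "q \<in> C" and q_max: "\<forall>y\<in>C. v \<bullet> y \<le> v \<bullet> q"
    using continuous_attains_sup[OF compact nonempty] by blast
  then obtain t u where "t \<ge> 1" "u \<in> N" "dist u (q + t *\<^sub>R v) \<le> \<delta>"
    using hits_rays v by blast
  then have "v \<bullet> (q - closest_point C u) \<le> 2 * \<delta>\<^sup>2"
    using closest_point_near_normal_ray(1)[OF convex closed \<open>q \<in> C\<close> v q_max _ _ \<delta>_le] by blast
  moreover have "v \<bullet> closest_point C u \<le> v \<bullet> z"
    using z_max \<open>u \<in> N\<close> by (simp add: hull_inc)
  moreover have "v \<bullet> y \<le> v \<bullet> q" using q_max assms by blast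
  ultimately have "dist y z \<le> 2 * \<delta>\<^sup>2"
    using \<open>v \<bullet> y - v \<bullet> z = dist y z\<close> by (simp add: inner_diff_right)
  then show ?thesis using \<open>z \<in> ?Q\<close> by blast
qed

lemma near_Inter_supporting_halfspaces:
  assumes "x \<in> \<Inter>(supporting_halfspace C ` N)"
  shows "\<exists>y\<in>C. dist x y \<le> 4 * \<delta>\<^sup>2"
proof (cases "x \<in> C")
  case True
  then show ?thesis by force
next
  case False
  define q where "q = closest_point C x"
  have "q \<in> C" unfolding q_def by (rule closest_point_in_set[OF closed nonempty])
  define h where "h = dist x q"
  have "h > 0" using False \<open>q \<in> C\<close> by (auto simp: h_def)
  define v where "v = (1 / h) *\<^sub>R (x - q)"
  have v: "norm v = 1" using \<open>h > 0\<close> by (simp add: v_def h_def dist_norm)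
  have x: "x = q + h *\<^sub>R v" using \<open>h > 0\<close> by (simp add: v_def)
  have normal: "\<forall>y\<in>C. v \<bullet> y \<le> v \<bullet> q"
  proof
    fix y assume "y \<in> C"
    have "(x - q) \<bullet> (y - q) \<le> 0" unfolding q_def using closest_point_dot[OF convex closed \<open>y \<in> C\<close>] .
    then show "v \<bullet> y \<le> v \<bullet> q" using \<open>h > 0\<close> by (simp add: v_def inner_diff_right divide_right_mono)
  qed
  obtain t u where "t \<ge> 1" "u \<in> N" "dist u (q + t *\<^sub>R v) \<le> \<delta>"
    using hits_rays[OF \<open>q \<in> C\<close> v] by blast
  moreover have "x \<in> supporting_halfspace C u" using assms \<open>u \<in> N\<close> by blast
  ultimately have "h \<le> 4 * \<delta>\<^sup>2"
    using supporting_halfspace_normal_ray_le[OF convex closed \<open>q \<in> C\<close> v normal _ _ \<delta>_le] \<open>h > 0\<close> x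
    by simp
  then show ?thesis using \<open>q \<in> C\<close> by (auto simp: h_def)
qed

lemma bounded_Inter_supporting_halfspaces: "bounded (\<Inter>(supporting_halfspace C ` N))"
proof -
  obtain R where R: "\<forall>y\<in>C. norm y \<le> R" using compact compact_imp_bounded bounded_iff by metis
  have "norm x \<le> R + 4 * \<delta>\<^sup>2" if x: "x \<in> \<Inter>(supporting_halfspace C ` N)" for x
  proof -
    obtain y where "y \<in> C" and "dist x y \<le> 4 * \<delta>\<^sup>2"
      using near_Inter_supporting_halfspaces[OF x] by blast
    moreover have "norm y \<le> R" using R \<open>y \<in> C\<close> by blast
    ultimately show ?thesis using norm_triangle_ineq2[of x y] by (simp add: dist_norm)
  qed
  then show ?thesis unfolding bounded_iff by blast
qed

lemma cball_subset_convex_hull_closest_points: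
  assumes "cball c r \<subseteq> C" and "4 * \<delta>\<^sup>2 < r"
  shows "cball c (r / 2) \<subseteq> convex hull (closest_point C ` N)"
proof (rule cball_subset_if_near_convex[OF _ convex_convex_hull assms(1)])
  show "closed (convex hull (closest_point C ` N))"
    using finite_net by (simp add: compact_imp_closed finite_imp_compact_convex_hull)
  show "\<forall>y\<in>C. \<exists>z\<in>convex hull (closest_point C ` N). dist y z \<le> 2 * \<delta>\<^sup>2"
    using near_convex_hull_closest_points by blast
  show "r / 2 + 2 * \<delta>\<^sup>2 < r" using assms(2) by simp
qed simp

lemma polytope_sandwich_closest_points:
  assumes "cball c r \<subseteq> C" and "0 < \<delta>" and "4 * \<delta>\<^sup>2 < r" and "N \<inter> C = {}"
  shows "polytope_sandwich (closest_point C ` N) (supporting_halfspace C ` N) C"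
proof -
  have "0 \<le> 4 * \<delta>\<^sup>2" by simp
  then have "r > 0" using assms(3) by linarith
  have "ball c (r / 2) \<subseteq> interior (convex hull (closest_point C ` N))"
    using cball_subset_convex_hull_closest_points[OF assms(1,3)] ball_subset_cball interior_maximal
    by (metis open_ball order_trans)
  then have "interior (convex hull (closest_point C ` N)) \<noteq> {}"
    using \<open>r > 0\<close> centre_in_ball[of c "r / 2"] by auto
  moreover have "convex hull (closest_point C ` N) \<subseteq> C"
    by (rule convex_hull_closest_points_subset)
  moreover have "\<forall>h\<in>supporting_halfspace C ` N. is_halfspace h"
    using is_halfspace_supporting_halfspace[OF closed nonempty] assms(4) by blast
  ultimately show ?thesis
    unfolding polytope_sandwich_def
    using finite_net bounded_Inter_supporting_halfspaces subset_supporting_halfspace[OF convex closed]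
    by blast
qed

lemma compact_convex_hull_closest_points: "compact (convex hull (closest_point C ` N))"
  using finite_net by (simp add: finite_imp_compact_convex_hull)

lemma compact_Inter_supporting_halfspaces: "compact (\<Inter>(supporting_halfspace C ` N))"
  using closed_supporting_halfspace bounded_Inter_supporting_halfspaces
  by (auto simp: compact_eq_bounded_closed)

lemma measure_le_convex_hull_closest_points:
  assumes "cball c r \<subseteq> C" and "0 < \<delta>" and "4 * \<delta>\<^sup>2 < r"
  shows "measure lborel C
    \<le> (1 + 4 * \<delta>\<^sup>2 / r) ^ DIM('a) * measure lborel (convex hull (closest_point C ` N))"
proof -
  have "measure lborel C
      \<le> (1 + 2 * \<delta>\<^sup>2 / (r / 2)) ^ DIM('a) * measure lborel (convex hull (closest_point C ` N))"
  proof (rule measure_le_if_near_convex[OF compact_convex_hull_closest_points convex_convex_hull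
        cball_subset_convex_hull_closest_points[OF assms(1,3)]])
    show "\<forall>y\<in>C. \<exists>z\<in>convex hull (closest_point C ` N). dist y z \<le> 2 * \<delta>\<^sup>2"
      using near_convex_hull_closest_points by blast
  qed (use assms(2,3) compact in \<open>auto simp: borel_compact less_trans[OF _ assms(3)]\<close>)
  then show ?thesis by simp
qed

lemma measure_Inter_supporting_halfspaces_le:
  assumes "cball c r \<subseteq> C" and "0 < \<delta>" and "0 < r"
  shows "measure lborel (\<Inter>(supporting_halfspace C ` N)) \<le> (1 + 4 * \<delta>\<^sup>2 / r) ^ DIM('a) * measure lborel C"
proof (rule measure_le_if_near_convex[OF compact convex assms(1,3)])
  show "\<forall>x\<in>\<Inter>(supporting_halfspace C ` N). \<exists>y\<in>C. dist x y \<le> 4 * \<delta>\<^sup>2"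
    using near_Inter_supporting_halfspaces by blast
qed (use compact_Inter_supporting_halfspaces assms(2) in \<open>auto simp: borel_compact\<close>)

lemma measure_gap_closest_points:
  assumes "cball c r \<subseteq> C" and "0 < \<delta>" and "4 * \<delta>\<^sup>2 < r"
  shows "measure lborel (\<Inter>(supporting_halfspace C ` N) - convex hull (closest_point C ` N))
    \<le> (4 ^ DIM('a) - 1) * (4 / r) * measure lborel C * \<delta>\<^sup>2"
proof -
  define Qin where "Qin = convex hull (closest_point C ` N)"
  define Qout where "Qout = \<Inter>(supporting_halfspace C ` N)"
  define l where "l = 1 + 4 * \<delta>\<^sup>2 / r"
  have "0 \<le> 4 * \<delta>\<^sup>2" by simp
  then have "r > 0" using assms(3) by linarith
  then have "l \<ge> 1" by (simp add: l_def)
  have "Qin \<subseteq> C" unfolding Qin_def by (rule convex_hull_closest_points_subset)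
  have "C \<subseteq> Qout" unfolding Qout_def using subset_supporting_halfspace[OF convex closed] by blast
  have "measure lborel Qout \<le> l ^ DIM('a) * (l ^ DIM('a) * measure lborel Qin)"
    using measure_Inter_supporting_halfspaces_le[OF assms(1,2) \<open>r > 0\<close>]
      measure_le_convex_hull_closest_points[OF assms] \<open>l \<ge> 1\<close>
    unfolding Qin_def Qout_def l_def[symmetric]
    by (meson mult_left_mono order_trans zero_le_one zero_le_power)
  moreover have "measure lborel (Qout - Qin) = measure lborel Qout - measure lborel Qin"
    using compact_convex_hull_closest_points compact_Inter_supporting_halfspaces
      emeasure_compact_finite[OF compact_Inter_supporting_halfspaces] \<open>Qin \<subseteq> C\<close> \<open>C \<subseteq> Qout\<close>
    by (intro measure_Diff) (auto simp: Qin_def Qout_def borel_compact)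
  moreover have "l ^ (2 * DIM('a)) = l ^ DIM('a) * l ^ DIM('a)" by (simp add: mult_2 power_add)
  ultimately have "measure lborel (Qout - Qin) \<le> (l ^ (2 * DIM('a)) - 1) * measure lborel Qin"
    by (simp add: algebra_simps)
  also have "\<dots> \<le> (l ^ (2 * DIM('a)) - 1) * measure lborel C"
    using \<open>Qin \<subseteq> C\<close> compact_convex_hull_closest_points compact \<open>l \<ge> 1\<close>
    by (intro mult_left_mono measure_mono_fmeasurable)
      (auto simp: Qin_def borel_compact fmeasurable_compact)
  also have "\<dots> \<le> (4 ^ DIM('a) - 1) * (4 * \<delta>\<^sup>2 / r) * measure lborel C"
  proof -
    have "4 * \<delta>\<^sup>2 / r \<le> 1" using assms(3) \<open>r > 0\<close> by simp
    then have "l ^ (2 * DIM('a)) - 1 \<le> (2 ^ (2 * DIM('a)) - 1) * (4 * \<delta>\<^sup>2 / r)"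
      unfolding l_def using \<open>r > 0\<close> by (intro one_plus_power_minus_one_le) auto
    then show ?thesis by (intro mult_right_mono) (auto simp: power_mult)
  qed
  also have "\<dots> = (4 ^ DIM('a) - 1) * (4 / r) * measure lborel C * \<delta>\<^sup>2" by simp
  finally show ?thesis unfolding Qin_def Qout_def .
qed

lemma card_closest_points_supporting_halfspaces_le:
  "card (closest_point C ` N) + card (supporting_halfspace C ` N) \<le> 2 * card N"
  using card_image_le[OF finite_net, of "closest_point C"]
    card_image_le[OF finite_net, of "supporting_halfspace C"] by linarith

end

section \<open>A ray net on the boundary of a cube\<close>

(* Grid points of mesh 2a/m on the boundary of the cube [-a, a]^d: the point indexed by
   (b, sigma, g) lies on the face where coordinate b equals sigma * a. *)
definition cube_grid :: "real \<Rightarrow> nat \<Rightarrow> 'a::euclidean_space set" where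
  "cube_grid a m = (\<lambda>(b, \<sigma>, g). \<Sum>i\<in>Basis. (if i = b then \<sigma> * a else - a + real (g i) * (2 * a / m)) *\<^sub>R i)
     ` (SIGMA b:Basis. {-1, 1} \<times> (Basis - {b} \<rightarrow>\<^sub>E {0..m}))"

lemma finite_cube_grid: "finite (cube_grid a m)"
  unfolding cube_grid_def by (intro finite_imageI finite_SigmaI finite_cartesian_product finite_PiE) auto

lemma card_cube_grid_le:
  "card (cube_grid a m :: 'a::euclidean_space set) \<le> DIM('a) * (2 * (m + 1) ^ (DIM('a) - 1))"
proof -
  have "card (cube_grid a m :: 'a set)
      \<le> card (SIGMA b:(Basis :: 'a set). {-1, 1 :: real} \<times> (Basis - {b} \<rightarrow>\<^sub>E {0..m}))"
    unfolding cube_grid_def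
    by (intro card_image_le finite_SigmaI finite_cartesian_product finite_PiE) auto
  also have "\<dots> = DIM('a) * (2 * (m + 1) ^ (DIM('a) - 1))"
    by (simp add: card_cartesian_product card_PiE card_Diff_singleton finite_PiE)
  finally show ?thesis .
qed

lemma norm_cube_grid_ge:
  assumes "0 \<le> a" and "u \<in> cube_grid a m"
  shows "a \<le> norm u"
proof -
  obtain b \<sigma> g where "b \<in> Basis" "\<sigma> \<in> {-1, 1}"
    and u: "u = (\<Sum>i\<in>Basis. (if i = b then \<sigma> * a else - a + real (g i) * (2 * a / m)) *\<^sub>R i)"
    using assms(2) unfolding cube_grid_def by auto
  then have "\<bar>u \<bullet> b\<bar> = a" using assms(1) by (auto simp: inner_sum_left_Basis)
  then show ?thesis using Basis_le_norm[OF \<open>b \<in> Basis\<close>, of u] by simp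
qed

lemma floor_grid_approx:
  fixes x a s :: real
  assumes "0 < s" and "\<bar>x\<bar> \<le> a"
  shows "0 \<le> \<lfloor>(x + a) / s\<rfloor>" and "\<lfloor>(x + a) / s\<rfloor> \<le> 2 * a / s"
    and "\<bar>- a + \<lfloor>(x + a) / s\<rfloor> * s - x\<bar> \<le> s"
proof -
  have "0 \<le> (x + a) / s" and "(x + a) / s \<le> 2 * a / s"
    using assms by (auto simp: divide_right_mono)
  then show "0 \<le> \<lfloor>(x + a) / s\<rfloor>" and "\<lfloor>(x + a) / s\<rfloor> \<le> 2 * a / s" by linarith+
  have "\<lfloor>(x + a) / s\<rfloor> \<le> (x + a) / s" and "(x + a) / s < \<lfloor>(x + a) / s\<rfloor> + 1"
    by linarith+
  then have "\<lfloor>(x + a) / s\<rfloor> * s \<le> x + a" and "x + a < (\<lfloor>(x + a) / s\<rfloor> + 1) * s"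
    by (simp_all only: pos_le_divide_eq[OF assms(1)] pos_divide_less_eq[OF assms(1)])
  then show "\<bar>- a + \<lfloor>(x + a) / s\<rfloor> * s - x\<bar> \<le> s" by (auto simp: algebra_simps)
qed

lemma cube_grid_covers:
  fixes y :: "'a::euclidean_space"
  assumes "0 < a" and "0 < m" and "infnorm y = a"
  shows "\<exists>u\<in>cube_grid a m. dist u y \<le> DIM('a) * (2 * a / m)"
proof -
  define s where "s = 2 * a / m"
  have "s > 0" using assms(1,2) by (simp add: s_def)
  have "infnorm y \<in> (\<lambda>i. \<bar>y \<bullet> i\<bar>) ` Basis" unfolding infnorm_Max by (rule Max_in) auto
  then obtain b where "b \<in> Basis" and b: "\<bar>y \<bullet> b\<bar> = a" using assms(3) by auto
  have y_bound: "\<bar>y \<bullet> i\<bar> \<le> a" if "i \<in> Basis" for i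
    using Basis_le_infnorm[OF that, of y] assms(3) by simp
  \<comment> \<open>Keep coordinate b, round the others down to the grid.\<close>
  define \<sigma> :: real where "\<sigma> = (if y \<bullet> b \<ge> 0 then 1 else -1)"
  define k where "k i = \<lfloor>(y \<bullet> i + a) / s\<rfloor>" for i
  define g where "g = restrict (\<lambda>i. nat (k i)) (Basis - {b})"
  have "2 * a / s = m" using assms(1) by (simp add: s_def)
  then have k_bounds: "0 \<le> k i \<and> k i \<le> int m" if "i \<in> Basis" for i
    using floor_grid_approx(1,2)[OF \<open>s > 0\<close> y_bound[OF that]] by (simp add: k_def)
  define u :: 'a where
    "u = (\<Sum>i\<in>Basis. (if i = b then \<sigma> * a else - a + real (g i) * s) *\<^sub>R i)"
  have "(b, \<sigma>, g) \<in> (SIGMA b:Basis. {-1, 1} \<times> (Basis - {b} \<rightarrow>\<^sub>E {0..m}))"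
    using \<open>b \<in> Basis\<close> k_bounds by (auto simp: \<sigma>_def g_def PiE_iff nat_le_iff)
  then have "u \<in> cube_grid a m"
    unfolding cube_grid_def u_def s_def by (rule rev_image_eqI) simp
  have coord: "\<bar>(u - y) \<bullet> i\<bar> \<le> s" if "i \<in> Basis" for i
  proof (cases "i = b")
    case True
    then show ?thesis using b \<open>s > 0\<close> that by (auto simp: u_def \<sigma>_def inner_diff_left inner_sum_left_Basis)
  next
    case False
    then have "(u - y) \<bullet> i = - a + k i * s - y \<bullet> i"
      using that k_bounds by (simp add: u_def g_def inner_diff_left inner_sum_left_Basis)
    then show ?thesis using floor_grid_approx(3)[OF \<open>s > 0\<close> y_bound[OF that]] by (simp add: k_def)
  qed
  have "dist u y \<le> (\<Sum>i\<in>Basis. \<bar>(u - y) \<bullet> i\<bar>)" unfolding dist_norm by (rule norm_le_l1)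
  also have "\<dots> \<le> (\<Sum>i\<in>(Basis :: 'a set). s)" using coord by (intro sum_mono)
  also have "\<dots> = DIM('a) * s" by simp
  finally show ?thesis using \<open>u \<in> cube_grid a m\<close> by (auto simp: s_def)
qed

lemma ray_hits_cube_boundary:
  fixes q v :: "'a::euclidean_space"
  assumes "norm q \<le> R" and "norm v = 1"
  shows "\<exists>t\<ge>1. infnorm (q + t *\<^sub>R v) = R + 1"
proof -
  define f where "f t = infnorm (q + t *\<^sub>R v)" for t
  define T where "T = sqrt DIM('a) * (R + 1) + R"
  have "0 \<le> R" using assms(1) norm_ge_zero[of q] by linarith
  have "f 0 \<le> R + 1" using infnorm_le_norm[of q] assms(1) by (simp add: f_def)
  have "0 \<le> T" using \<open>0 \<le> R\<close> by (simp add: T_def)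
  have "sqrt DIM('a) * (R + 1) \<le> norm (q + T *\<^sub>R v)"
    using norm_diff_ineq[of "T *\<^sub>R v" q] assms \<open>0 \<le> T\<close> by (simp add: T_def add.commute)
  also have "\<dots> \<le> sqrt DIM('a) * f T" unfolding f_def by (rule norm_le_infnorm)
  finally have "R + 1 \<le> f T" by (simp add: mult_le_cancel_left_pos)
  moreover have "continuous_on {0..T} f" unfolding f_def by (intro continuous_intros)
  ultimately obtain t where "0 \<le> t" "t \<le> T" "f t = R + 1"
    using IVT'[of f 0 "R + 1" T] \<open>f 0 \<le> R + 1\<close> \<open>0 \<le> T\<close> by blast
  have "R + 1 \<le> norm (q + t *\<^sub>R v)" using \<open>f t = R + 1\<close> infnorm_le_norm unfolding f_def by metis
  also have "\<dots> \<le> norm q + t" using norm_triangle_ineq[of q "t *\<^sub>R v"] \<open>0 \<le> t\<close> assms(2) by simp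
  finally have "1 \<le> t" using assms(1) by simp
  then show ?thesis using \<open>f t = R + 1\<close> unfolding f_def by blast
qed

lemma cube_grid_ray_net:
  fixes C :: "'a::euclidean_space set" and R \<delta> :: real
  assumes C: "\<forall>x\<in>C. norm x \<le> R" and "0 \<le> R" and "0 < \<delta>" and "\<delta> \<le> 1"
  obtains N where "finite N" and "N \<inter> C = {}"
    and "\<And>q v. q \<in> C \<Longrightarrow> norm v = 1 \<Longrightarrow> \<exists>t\<ge>1. \<exists>u\<in>N. dist u (q + t *\<^sub>R v) \<le> \<delta>"
    and "real (card N) \<le> 2 * DIM('a) * (2 * (R + 1) * DIM('a) + 2) ^ (DIM('a) - 1) / \<delta> ^ (DIM('a) - 1)"
proof -
  define a where "a = R + 1"
  define m where "m = nat \<lceil>2 * a * DIM('a) / \<delta>\<rceil>"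
  have "a > 0" using \<open>0 \<le> R\<close> by (simp add: a_def)
  have m_ge: "2 * a * DIM('a) / \<delta> \<le> real m" unfolding m_def by (rule real_nat_ceiling_ge)
  have m_le: "real m \<le> 2 * a * DIM('a) / \<delta> + 1"
    using \<open>a > 0\<close> \<open>0 < \<delta>\<close> by (simp add: m_def)
  have "0 < 2 * a * DIM('a) / \<delta>" using \<open>a > 0\<close> \<open>0 < \<delta>\<close> by simp
  then have "m > 0" using m_ge by linarith
  have mesh: "DIM('a) * (2 * a / m) \<le> \<delta>"
    using m_ge \<open>m > 0\<close> \<open>0 < \<delta>\<close> by (simp add: field_simps)
  show ?thesis
  proof (rule that[of "cube_grid a m"])
    show "finite (cube_grid a m)" by (rule finite_cube_grid)
    show "cube_grid a m \<inter> C = {}"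
      using norm_cube_grid_ge[of a _ m] C \<open>a > 0\<close> by (force simp: a_def)
    show "\<exists>t\<ge>1. \<exists>u\<in>cube_grid a m. dist u (q + t *\<^sub>R v) \<le> \<delta>"
      if q: "q \<in> C" and v: "norm v = 1" for q v
    proof -
      obtain t where "t \<ge> 1" and "infnorm (q + t *\<^sub>R v) = a"
        using ray_hits_cube_boundary[of q R v] C q v by (auto simp: a_def)
      obtain u where "u \<in> cube_grid a m" and "dist u (q + t *\<^sub>R v) \<le> DIM('a) * (2 * a / m)"
        using cube_grid_covers[OF \<open>a > 0\<close> \<open>m > 0\<close> \<open>infnorm (q + t *\<^sub>R v) = a\<close>] by blast
      then show ?thesis using \<open>t \<ge> 1\<close> mesh by force
    qed
    have "real m + 1 \<le> (2 * a * DIM('a) + 2) / \<delta>"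
      using m_le \<open>0 < \<delta>\<close> \<open>\<delta> \<le> 1\<close> by (simp add: field_simps)
    have "real (card (cube_grid a m :: 'a set)) \<le> real (DIM('a) * (2 * (m + 1) ^ (DIM('a) - 1)))"
      by (simp only: of_nat_le_iff card_cube_grid_le)
    also have "\<dots> = DIM('a) * (2 * (real m + 1) ^ (DIM('a) - 1))" by (simp add: add.commute)
    also have "\<dots> \<le> DIM('a) * (2 * ((2 * a * DIM('a) + 2) / \<delta>) ^ (DIM('a) - 1))"
      using \<open>real m + 1 \<le> _\<close> by (intro mult_left_mono power_mono) auto
    finally show "real (card (cube_grid a m :: 'a set))
        \<le> 2 * DIM('a) * (2 * (R + 1) * DIM('a) + 2) ^ (DIM('a) - 1) / \<delta> ^ (DIM('a) - 1)"
      by (simp add: a_def power_divide ac_simps)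
  qed
qed

section \<open>The rate\<close>

lemma convex_body_polytope_sandwiches:
  fixes C :: "'a::euclidean_space set"
  assumes "convex_body C"
  obtains \<delta>0 A B where "\<delta>0 > 0"
    and "\<And>\<delta>. 0 < \<delta> \<Longrightarrow> \<delta> \<le> \<delta>0 \<Longrightarrow> \<exists>V H. polytope_sandwich V H C \<and>
           real (card V + card H) \<le> A / \<delta> ^ (DIM('a) - 1) \<and>
           measure lborel (\<Inter>H - convex hull V) \<le> B * \<delta>\<^sup>2"
proof -
  have "compact C" and "convex C" and "interior C \<noteq> {}"
    using assms by (auto simp: convex_body_def)
  then obtain c r where "r > 0" and ball: "cball c r \<subseteq> C" using mem_interior_cball by blast
  obtain R where "R > 0" and R: "\<forall>x\<in>C. norm x \<le> R"
    using compact_imp_bounded[OF \<open>compact C\<close>] by (auto simp: bounded_pos)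
  define \<delta>0 where "\<delta>0 = min (1/4) (sqrt r / 4)"
  define A where "A = 4 * DIM('a) * (2 * (R + 1) * DIM('a) + 2) ^ (DIM('a) - 1)"
  define B where "B = (4 ^ DIM('a) - 1) * (4 / r) * measure lborel C"
  show ?thesis
  proof (rule that[of \<delta>0 A B])
    show "\<delta>0 > 0" using \<open>r > 0\<close> by (simp add: \<delta>0_def)
    fix \<delta> :: real assume "0 < \<delta>" and "\<delta> \<le> \<delta>0"
    then have "\<delta> \<le> 1/4" by (simp add: \<delta>0_def)
    have "4 * \<delta>\<^sup>2 < r"
    proof -
      have "\<delta>\<^sup>2 \<le> (sqrt r / 4)\<^sup>2" using \<open>0 < \<delta>\<close> \<open>\<delta> \<le> \<delta>0\<close> by (intro power_mono) (auto simp: \<delta>0_def)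
      then show ?thesis using \<open>r > 0\<close> by (simp add: power_divide)
    qed
    obtain N where "finite N" and "N \<inter> C = {}"
      and hits: "\<And>q v. q \<in> C \<Longrightarrow> norm v = 1 \<Longrightarrow> \<exists>t\<ge>1. \<exists>u\<in>N. dist u (q + t *\<^sub>R v) \<le> \<delta>"
      and card_N: "real (card N)
        \<le> 2 * DIM('a) * (2 * (R + 1) * DIM('a) + 2) ^ (DIM('a) - 1) / \<delta> ^ (DIM('a) - 1)"
      using cube_grid_ray_net[OF R less_imp_le[OF \<open>R > 0\<close>] \<open>0 < \<delta>\<close>] \<open>\<delta> \<le> 1/4\<close> by auto
    interpret ray_net C N \<delta>
      using \<open>compact C\<close> \<open>convex C\<close> ball \<open>r > 0\<close> \<open>finite N\<close> \<open>\<delta> \<le> 1/4\<close> hits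
      by unfold_locales auto
    have "real (card (closest_point C ` N) + card (supporting_halfspace C ` N)) \<le> 2 * real (card N)"
      using of_nat_mono[OF card_closest_points_supporting_halfspaces_le] by simp
    also have "\<dots> \<le> A / \<delta> ^ (DIM('a) - 1)" using card_N by (simp add: A_def)
    finally have "real (card (closest_point C ` N) + card (supporting_halfspace C ` N))
        \<le> A / \<delta> ^ (DIM('a) - 1)" .
    then show "\<exists>V H. polytope_sandwich V H C \<and> real (card V + card H) \<le> A / \<delta> ^ (DIM('a) - 1) \<and>
        measure lborel (\<Inter>H - convex hull V) \<le> B * \<delta>\<^sup>2"
      using polytope_sandwich_closest_points[OF ball \<open>0 < \<delta>\<close> \<open>4 * \<delta>\<^sup>2 < r\<close> \<open>N \<inter> C = {}\<close>]
        measure_gap_closest_points[OF ball \<open>0 < \<delta>\<close> \<open>4 * \<delta>\<^sup>2 < r\<close>]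
      unfolding B_def by blast
  qed
qed

lemma powr_balance:
  fixes n \<delta>0 A B :: real and d :: nat
  assumes "1 \<le> n" and "0 < \<delta>0" and "1 \<le> d"
  defines "\<delta> \<equiv> \<delta>0 / n powr (1 / (real d + 1))"
  shows "0 < \<delta>" and "\<delta> \<le> \<delta>0"
    and "A / \<delta> ^ (d - 1) + n * (B * \<delta>\<^sup>2) = (A / \<delta>0 ^ (d - 1) + B * \<delta>0\<^sup>2) * n powr (1 - 2 / (real d + 1))"
proof -
  define x where "x = n powr (1 / (real d + 1))"
  have "x \<ge> 1" unfolding x_def using assms(1) by (intro ge_one_powr_ge_zero) auto
  then show "0 < \<delta>" and "\<delta> \<le> \<delta>0"
    using assms(2) by (auto simp: \<delta>_def x_def[symmetric] divide_le_eq)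
  have x_pow: "x ^ k = n powr (real k / (real d + 1))" for k
    using \<open>x \<ge> 1\<close> assms(1) by (simp add: x_def powr_realpow[symmetric] powr_powr)
  have "x ^ (d + 1) = n"
    using x_pow[of "d + 1"] assms(1) by (simp add: add.commute)
  moreover have "d + 1 = (d - 1) + 2" using assms(3) by simp
  ultimately have n_eq: "n = x ^ (d - 1) * x\<^sup>2" by (metis power_add)
  have \<delta>_eq: "\<delta> = \<delta>0 / x" by (simp add: \<delta>_def x_def)
  have "A / \<delta> ^ (d - 1) = A / \<delta>0 ^ (d - 1) * x ^ (d - 1)"
    unfolding \<delta>_eq using \<open>x \<ge> 1\<close> by (simp add: power_divide)
  moreover have "n * (B * \<delta>\<^sup>2) = B * \<delta>0\<^sup>2 * x ^ (d - 1)"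
    unfolding \<delta>_eq n_eq using \<open>x \<ge> 1\<close> by (simp add: power_divide field_simps)
  moreover have "n powr (1 - 2 / (real d + 1)) = x ^ (d - 1)"
    using assms(3) by (simp add: x_pow of_nat_diff field_simps)
  ultimately show "A / \<delta> ^ (d - 1) + n * (B * \<delta>\<^sup>2)
      = (A / \<delta>0 ^ (d - 1) + B * \<delta>0\<^sup>2) * n powr (1 - 2 / (real d + 1))"
    by (simp add: algebra_simps)
qed

lemma expected_price_convex_body_le:
  fixes C :: "'a::euclidean_space set"
  assumes "convex_body C"
  obtains \<delta>0 A B where "\<delta>0 > 0"
    and "\<And>n \<delta>. 0 < \<delta> \<Longrightarrow> \<delta> \<le> \<delta>0 \<Longrightarrow>
           (\<integral>\<^sup>+ \<omega>. ennreal (real (price (\<omega> ` {..<n}) C)) \<partial>unit_cube_sample n)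
             \<le> ennreal (A / \<delta> ^ (DIM('a) - 1) + real n * (B * \<delta>\<^sup>2))"
proof -
  obtain \<delta>0 A B where "\<delta>0 > 0" and sandwiches: "\<And>\<delta>. 0 < \<delta> \<Longrightarrow> \<delta> \<le> \<delta>0 \<Longrightarrow> \<exists>V H.
      polytope_sandwich V H C \<and> real (card V + card H) \<le> A / \<delta> ^ (DIM('a) - 1) \<and>
      measure lborel (\<Inter>H - convex hull V) \<le> B * \<delta>\<^sup>2"
    using convex_body_polytope_sandwiches[OF assms] by blast
  have "closed C" and "convex C" using assms by (auto simp: convex_body_def compact_imp_closed)
  show ?thesis
  proof (rule that[OF \<open>\<delta>0 > 0\<close>])
    fix n :: nat and \<delta> :: real assume "0 < \<delta>" and "\<delta> \<le> \<delta>0"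
    then obtain V H where "polytope_sandwich V H C" and "real (card V + card H) \<le> A / \<delta> ^ (DIM('a) - 1)"
      and "measure lborel (\<Inter>H - convex hull V) \<le> B * \<delta>\<^sup>2"
      using sandwiches by blast
    have "(\<integral>\<^sup>+ \<omega>. ennreal (real (price (\<omega> ` {..<n}) C)) \<partial>unit_cube_sample n)
        \<le> ennreal (real (card V + card H) + real n * measure lborel (\<Inter>H - convex hull V))"
      by (rule expected_price_le_polytope_sandwich[OF \<open>closed C\<close> \<open>convex C\<close> \<open>polytope_sandwich V H C\<close>])
    also have "\<dots> \<le> ennreal (A / \<delta> ^ (DIM('a) - 1) + real n * (B * \<delta>\<^sup>2))"
      using \<open>real (card V + card H) \<le> _\<close> \<open>measure lborel (\<Inter>H - convex hull V) \<le> _\<close>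
      by (intro ennreal_leI add_mono mult_left_mono) auto
    finally show "(\<integral>\<^sup>+ \<omega>. ennreal (real (price (\<omega> ` {..<n}) C)) \<partial>unit_cube_sample n)
        \<le> ennreal (A / \<delta> ^ (DIM('a) - 1) + real n * (B * \<delta>\<^sup>2))" .
  qed
qed

theorem lemmaB3:
  fixes C :: "'a::euclidean_space set" and c :: real
  assumes "c \<le> 1"
    and "convex_body C"
    and "measure lborel C \<ge> c"
  shows "\<exists>K::real. \<forall>n::nat. n \<ge> 1 \<longrightarrow>
           (\<integral>\<^sup>+ \<omega>. ennreal (real (price (\<omega> ` {..<n}) C)) \<partial>(unit_cube_sample n :: (nat \<Rightarrow> 'a) measure))
             \<le> ennreal (K * real n powr (1 - 2 / (real DIM('a) + 1)))"
proof -
  obtain \<delta>0 A B where "\<delta>0 > 0" and expected_price: "\<And>n \<delta>. 0 < \<delta> \<Longrightarrow> \<delta> \<le> \<delta>0 \<Longrightarrow>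
      (\<integral>\<^sup>+ \<omega>. ennreal (real (price (\<omega> ` {..<n}) C)) \<partial>(unit_cube_sample n :: (nat \<Rightarrow> 'a) measure))
        \<le> ennreal (A / \<delta> ^ (DIM('a) - 1) + real n * (B * \<delta>\<^sup>2))"
    using expected_price_convex_body_le[OF assms(2)] by blast
  have "1 \<le> DIM('a)" by (simp add: Suc_le_eq)
  show ?thesis
  proof (intro exI[of _ "A / \<delta>0 ^ (DIM('a) - 1) + B * \<delta>0\<^sup>2"] allI impI)
    fix n :: nat assume "n \<ge> 1"
    define \<delta> where "\<delta> = \<delta>0 / real n powr (1 / (real DIM('a) + 1))"
    note balance = powr_balance[where n = "real n" and d = "DIM('a)",
        OF _ \<open>\<delta>0 > 0\<close> \<open>1 \<le> DIM('a)\<close>, folded \<delta>_def]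
    have "0 < \<delta>" and "\<delta> \<le> \<delta>0" using balance(1,2) \<open>n \<ge> 1\<close> by auto
    then show "(\<integral>\<^sup>+ \<omega>. ennreal (real (price (\<omega> ` {..<n}) C)) \<partial>(unit_cube_sample n :: (nat \<Rightarrow> 'a) measure))
        \<le> ennreal ((A / \<delta>0 ^ (DIM('a) - 1) + B * \<delta>0\<^sup>2) * real n powr (1 - 2 / (real DIM('a) + 1)))"
      using expected_price[of \<delta> n] balance(3) \<open>n \<ge> 1\<close> by simp
  qed
qed

end
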